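(* Let $r\ge 2$ be an integer. For $n>r$ let $f_r(n)=\max\{q_{\min}(G): G \text{ is a graph of order } n \text{ containing no } K_{r+1}\}$, and let $c_r=\sup\{q_{\min}(G)/v(G): G \text{ is a graph with no } K_{r+1}\}$. Then the limit $\lim_{n\to\infty} f_r(n)/n$ exists and equals $c_r$.
   Context: All graphs are finite and simple with at least one vertex; $v(G)$ is the number of vertices of $G$; $K_{r+1}$ is the complete graph on $r+1$ vertices and "containing no $K_{r+1}$" means having no subgraph isomorphic to $K_{r+1}$. For a graph $G$ with adjacency matrix $A$ and diagonal degree matrix $D$, the signless Laplacian is $Q(G)=D+A$, and $q_{\min}(G)$ denotes its smallest eigenvalue. *)

theory Defs
  imports Complex_Main "Jordan_Normal_Form.Char_Poly"
begin

definition simple_graph_on :: "nat \<Rightarrow> (nat \<Rightarrow> nat \<Rightarrow> bool) \<Rightarrow> bool" where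
  "simple_graph_on n E \<longleftrightarrow>
     (\<forall>i j. E i j \<longrightarrow> i < n \<and> j < n) \<and> (\<forall>i j. E i j \<longrightarrow> E j i) \<and> (\<forall>i. \<not> E i i)"

definition contains_clique :: "nat \<Rightarrow> (nat \<Rightarrow> nat \<Rightarrow> bool) \<Rightarrow> nat \<Rightarrow> bool" where
  "contains_clique n E k \<longleftrightarrow>
     (\<exists>S. S \<subseteq> {..<n} \<and> card S = k \<and> (\<forall>i\<in>S. \<forall>j\<in>S. i \<noteq> j \<longrightarrow> E i j))"

definition degree :: "nat \<Rightarrow> (nat \<Rightarrow> nat \<Rightarrow> bool) \<Rightarrow> nat \<Rightarrow> nat" where
  "degree n E i = card {k. k < n \<and> E i k}"

definition signless_laplacian :: "nat \<Rightarrow> (nat \<Rightarrow> nat \<Rightarrow> bool) \<Rightarrow> real mat" where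
  "signless_laplacian n E =
     mat n n (\<lambda>(i, j). (if i = j then real (degree n E i) else 0) + (if E i j then 1 else 0))"

definition q_min :: "nat \<Rightarrow> (nat \<Rightarrow> nat \<Rightarrow> bool) \<Rightarrow> real" where
  "q_min n E = Min {a. eigenvalue (signless_laplacian n E) a}"

definition f_r :: "nat \<Rightarrow> nat \<Rightarrow> real" where
  "f_r r n = Max {q_min n E | E. simple_graph_on n E \<and> \<not> contains_clique n E (r + 1)}"

definition c_r :: "nat \<Rightarrow> real" where
  "c_r r = Sup {q_min n E / real n | n E. n \<ge> 1 \<and> simple_graph_on n E \<and> \<not> contains_clique n E (r + 1)}"

end

(* The minimum eigenvalue q_min of the signless Laplacian Q is the minimum of the Rayleigh
   quotient x^T Q x / |x|^2, where x^T Q x is the sum of (x_i + x_j)^2 over the edges ij.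
   The bound f_r(n)/n <= c_r is immediate.  Conversely, take a K_{r+1}-free graph G on m
   vertices with q_min(G)/m close to c_r and blow it up to n vertices, replacing each vertex
   by an independent class of about n/m vertices; the result is still K_{r+1}-free.  For the
   exact T-fold blow-up the Rayleigh quotient gives q_min >= T q_min(G): summing a vector over
   each class reduces the form to that of G, and the variance within classes is weighted by
   degrees, which are at least q_min(G).  Deleting at most m vertices to reach order n
   costs at most m, so f_r(n)/n >= q_min(G)/m - m/n. *)

theory Submission
  imports Defs "HOL-Analysis.Analysis"
begin

definition signless_apply :: "nat \<Rightarrow> (nat \<Rightarrow> nat \<Rightarrow> bool) \<Rightarrow> (nat \<Rightarrow> real) \<Rightarrow> nat \<Rightarrow> real" where
  "signless_apply n E x i = real (degree n E i) * x i + (\<Sum>j<n. if E i j then x j else 0)"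

text \<open>Every edge is counted twice in the double sum, so this is the quadratic form
  \<open>x\<^sup>T Q x\<close> of the signless Laplacian: the sum of \<open>(x i + x j)\<^sup>2\<close> over the edges \<open>ij\<close>.\<close>
definition signless_form :: "nat \<Rightarrow> (nat \<Rightarrow> nat \<Rightarrow> bool) \<Rightarrow> (nat \<Rightarrow> real) \<Rightarrow> real" where
  "signless_form n E x = (\<Sum>i<n. \<Sum>j<n. if E i j then (x i + x j)^2 else 0) / 2"

definition sq_norm :: "nat \<Rightarrow> (nat \<Rightarrow> real) \<Rightarrow> real" where
  "sq_norm n x = (\<Sum>i<n. (x i)^2)"

lemma simple_graph_on_sym: "simple_graph_on n E \<Longrightarrow> E i j = E j i"
  unfolding simple_graph_on_def by blast

lemma simple_graph_on_irrefl: "simple_graph_on n E \<Longrightarrow> \<not> E i i"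
  unfolding simple_graph_on_def by blast

lemma degree_eq_sum: "real (degree n E i) = (\<Sum>j<n. if E i j then 1 else 0)"
proof -
  have "{k. k < n \<and> E i k} = {k\<in>{..<n}. E i k}" by auto
  then have "real (degree n E i) = (\<Sum>j\<in>{k\<in>{..<n}. E i k}. 1)" by (simp add: degree_def)
  also have "\<dots> = (\<Sum>j<n. if E i j then 1 else 0)" by (rule sum.inter_filter) simp
  finally show ?thesis .
qed

lemma degree_le_order: "degree n E i \<le> n"
  unfolding degree_def using card_mono[of "{..<n}" "{k. k < n \<and> E i k}"] by auto

lemma signless_laplacian_carrier: "signless_laplacian n E \<in> carrier_mat n n"
  by (simp add: signless_laplacian_def)

lemma signless_laplacian_mult_vec_nth:
  assumes "v \<in> carrier_vec n" "i < n"
  shows "(signless_laplacian n E *\<^sub>v v) $ i = signless_apply n E (\<lambda>j. v $ j) i"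
proof -
  have "(signless_laplacian n E *\<^sub>v v) $ i
      = (\<Sum>j<n. ((if i = j then real (degree n E i) else 0) + (if E i j then 1 else 0)) * v $ j)"
    using assms by (simp add: signless_laplacian_def scalar_prod_def lessThan_atLeast0)
  also have "\<dots> = (\<Sum>j<n. if i = j then real (degree n E i) * v $ j else 0)
      + (\<Sum>j<n. if E i j then v $ j else 0)"
    by (subst sum.distrib[symmetric]) (intro sum.cong refl, auto simp: algebra_simps)
  also have "\<dots> = signless_apply n E (\<lambda>j. v $ j) i"
    using assms by (simp add: signless_apply_def sum.delta)
  finally show ?thesis .
qed

lemma signless_apply_add_scaled:
  "signless_apply n E (\<lambda>i. x i + t * y i) k = signless_apply n E x k + t * signless_apply n E y k"
  unfolding signless_apply_def
  by (simp add: algebra_simps sum.distrib[symmetric] sum_distrib_left if_distrib cong: if_cong)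

lemma inner_signless_apply_commute:
  assumes G: "simple_graph_on n E"
  shows "(\<Sum>i<n. x i * signless_apply n E y i) = (\<Sum>i<n. y i * signless_apply n E x i)"
proof -
  have split: "(\<Sum>i<n. x i * signless_apply n E y i) = (\<Sum>i<n. real (degree n E i) * x i * y i)
     + (\<Sum>i<n. \<Sum>j<n. if E i j then x i * y j else 0)" for x y
    unfolding signless_apply_def
    by (simp add: algebra_simps sum.distrib sum_distrib_left if_distrib cong: if_cong)
  have "(\<Sum>i<n. \<Sum>j<n. if E i j then x i * y j else 0) = (\<Sum>i<n. \<Sum>j<n. if E i j then y i * x j else 0)"
    by (subst sum.swap) (intro sum.cong refl, auto simp: simple_graph_on_sym[OF G] mult.commute)
  then show ?thesis by (simp add: split mult.commute mult.left_commute)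
qed

lemma inner_signless_apply_self:
  assumes G: "simple_graph_on n E"
  shows "(\<Sum>i<n. x i * signless_apply n E x i) = signless_form n E x"
proof -
  let ?S = "\<lambda>f. \<Sum>i<n. \<Sum>j<n. if E i j then f i j else 0 :: real"
  have lhs: "(\<Sum>i<n. x i * signless_apply n E x i) = ?S (\<lambda>i j. (x i)^2 + x i * x j)"
    unfolding signless_apply_def degree_eq_sum
    by (intro sum.cong refl)
      (simp add: sum_distrib_left sum_distrib_right sum.distrib[symmetric] power2_eq_square
        if_distrib cong: if_cong, intro sum.cong refl, simp add: algebra_simps)
  have swap: "?S (\<lambda>i j. (x j)^2 + x j * x i) = ?S (\<lambda>i j. (x i)^2 + x i * x j)"
    by (subst sum.swap) (simp add: simple_graph_on_sym[OF G])
  have "2 * signless_form n E x = ?S (\<lambda>i j. (x i)^2 + x i * x j) + ?S (\<lambda>i j. (x j)^2 + x j * x i)"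
    unfolding signless_form_def
    by (simp add: sum.distrib[symmetric] if_distrib power2_eq_square algebra_simps cong: if_cong)
  then show ?thesis using lhs swap by simp
qed

lemma signless_form_nonneg: "0 \<le> signless_form n E x"
  unfolding signless_form_def by (intro divide_nonneg_nonneg sum_nonneg) auto

lemma sq_norm_nonneg: "0 \<le> sq_norm n x"
  unfolding sq_norm_def by (intro sum_nonneg) auto

lemma signless_apply_cong:
  "(\<And>j. j < n \<Longrightarrow> x j = y j) \<Longrightarrow> i < n \<Longrightarrow> signless_apply n E x i = signless_apply n E y i"
  unfolding signless_apply_def by (auto intro!: sum.cong)

lemma signless_form_cong: "(\<And>j. j < n \<Longrightarrow> x j = y j) \<Longrightarrow> signless_form n E x = signless_form n E y"
  unfolding signless_form_def by (auto intro!: sum.cong)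

lemma sq_norm_cong: "(\<And>j. j < n \<Longrightarrow> x j = y j) \<Longrightarrow> sq_norm n x = sq_norm n y"
  unfolding sq_norm_def by (auto intro!: sum.cong)

lemma signless_form_scale: "signless_form n E (\<lambda>i. c * x i) = c^2 * signless_form n E x"
  unfolding signless_form_def
  by (simp add: sum_distrib_left power2_eq_square algebra_simps if_distrib cong: if_cong)

lemma sq_norm_scale: "sq_norm n (\<lambda>i. c * x i) = c^2 * sq_norm n x"
  unfolding sq_norm_def by (simp add: sum_distrib_left power2_eq_square algebra_simps)

lemma sq_norm_pos_if_nonzero: "i < n \<Longrightarrow> x i \<noteq> 0 \<Longrightarrow> 0 < sq_norm n x"
  unfolding sq_norm_def by (intro sum_pos2[of _ i]) auto

lemma sum_unit_vector_mult:
  fixes f :: "nat \<Rightarrow> real"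
  assumes "k < n"
  shows "(\<Sum>i<n. (if i = k then 1 else 0) * f i) = f k"
proof -
  have "(\<Sum>i<n. (if i = k then 1 else 0) * f i) = (\<Sum>i<n. if i = k then f i else 0)"
    by (intro sum.cong) auto
  then show ?thesis using assms by (simp add: sum.delta)
qed

lemma sq_norm_indicator: "k < n \<Longrightarrow> sq_norm n (\<lambda>i. if i = k then 1 else 0) = 1"
  using sum_unit_vector_mult[of k n "\<lambda>i. if i = k then 1 else 0"]
  unfolding sq_norm_def by (simp add: power2_eq_square)

lemma rayleigh_add_scaled:
  assumes G: "simple_graph_on n E"
  shows "signless_form n E (\<lambda>i. x i + t * y i) - m * sq_norm n (\<lambda>i. x i + t * y i)
    = (signless_form n E x - m * sq_norm n x)
      + 2 * t * (\<Sum>i<n. y i * (signless_apply n E x i - m * x i))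
      + t^2 * (signless_form n E y - m * sq_norm n y)"
proof -
  let ?A = "signless_apply n E"
  have "signless_form n E (\<lambda>i. x i + t * y i) = (\<Sum>i<n. (x i + t * y i) * (?A x i + t * ?A y i))"
    using inner_signless_apply_self[OF G, of "\<lambda>i. x i + t * y i"]
    by (simp add: signless_apply_add_scaled)
  also have "\<dots> = (\<Sum>i<n. x i * ?A x i) + t * (\<Sum>i<n. x i * ?A y i) + t * (\<Sum>i<n. y i * ?A x i)
     + t^2 * (\<Sum>i<n. y i * ?A y i)"
    by (simp add: sum.distrib sum_distrib_left algebra_simps power2_eq_square)
  finally have form: "signless_form n E (\<lambda>i. x i + t * y i)
      = signless_form n E x + 2 * t * (\<Sum>i<n. y i * ?A x i) + t^2 * signless_form n E y"
    by (simp add: inner_signless_apply_self[OF G] inner_signless_apply_commute[OF G, of x y])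
  have norm: "sq_norm n (\<lambda>i. x i + t * y i) = sq_norm n x + 2 * t * (\<Sum>i<n. y i * x i) + t^2 * sq_norm n y"
    unfolding sq_norm_def by (simp add: sum.distrib sum_distrib_left algebra_simps power2_eq_square)
  show ?thesis
    unfolding form norm by (simp add: sum_subtractf sum_distrib_left algebra_simps)
qed

lemma eigenvalue_imp_rayleigh_eq:
  assumes G: "simple_graph_on n E" and a: "eigenvalue (signless_laplacian n E) a"
  obtains x where "0 < sq_norm n x" "signless_form n E x = a * sq_norm n x"
proof -
  obtain w where w: "w \<in> carrier_vec n" "w \<noteq> 0\<^sub>v n" "signless_laplacian n E *\<^sub>v w = a \<cdot>\<^sub>v w"
    using a signless_laplacian_carrier[of n E] unfolding eigenvalue_def eigenvector_def by auto
  define x where "x = (\<lambda>j. w $ j)"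
  have "(\<Sum>i<n. x i * signless_apply n E x i) = (\<Sum>i<n. a * (x i)^2)"
    using w by (intro sum.cong refl)
      (simp add: x_def power2_eq_square signless_laplacian_mult_vec_nth[symmetric])
  then have "signless_form n E x = a * sq_norm n x"
    by (simp add: inner_signless_apply_self[OF G] sq_norm_def sum_distrib_left)
  moreover obtain i where "i < n" "w $ i \<noteq> 0"
    using w(1,2) by (metis eq_vecI carrier_vecD index_zero_vec)
  then have "0 < sq_norm n x" by (intro sq_norm_pos_if_nonzero) (auto simp: x_def)
  ultimately show ?thesis using that by blast
qed

lemma linear_coeff_zero_if_nonneg_quadratic:
  fixes b c :: real
  assumes "\<And>t. 0 \<le> 2 * t * b + t^2 * c"
  shows "b = 0"
proof -
  define s where "s = \<bar>c\<bar> + 1"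
  have s: "s > 0" "c - 2 * s < 0" by (auto simp: s_def)
  have "0 \<le> 2 * (- b / s) * b + (- b / s)^2 * c" by (rule assms)
  also have "\<dots> = b^2 * (c - 2 * s) / s^2"
    using s by (simp add: field_simps power2_eq_square)
  finally have "0 \<le> b^2 * (c - 2 * s)" using s by (simp add: zero_le_divide_iff)
  then show ?thesis using s by (simp add: zero_le_mult_iff)
qed

lemma unit_sphere_attains_inf:
  fixes g :: "(nat \<Rightarrow> real) \<Rightarrow> real"
  assumes n: "n \<ge> 1" and g: "continuous_on UNIV g"
  obtains x0 where "sq_norm n x0 = 1" "\<And>y. sq_norm n y = 1 \<Longrightarrow> (\<forall>i\<ge>n. y i = 0) \<Longrightarrow> g x0 \<le> g y"
proof -
  define S where "S = {y::nat\<Rightarrow>real. (\<forall>i\<ge>n. y i = 0) \<and> sq_norm n y = 1}"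
  define K where "K = Pi\<^sub>E UNIV (\<lambda>i::nat. if i < n then {-1..1::real} else {0})"
  have "compactin (product_topology (\<lambda>_. euclideanreal) UNIV) K"
    unfolding K_def by (subst compactin_PiE) auto
  then have K: "compact K" by (simp add: euclidean_product_topology)
  have "S \<subseteq> K"
  proof
    fix y assume y: "y \<in> S"
    have "\<bar>y i\<bar> \<le> 1" if "i < n" for i
    proof -
      have "(y i)^2 \<le> sq_norm n y"
        using that unfolding sq_norm_def by (intro member_le_sum) auto
      then show ?thesis using y abs_le_square_iff[of "y i" 1] by (simp add: S_def)
    qed
    then show "y \<in> K" using y by (auto simp: K_def S_def PiE_iff abs_le_iff)
  qed
  moreover have "closed S"
  proof -
    have "S = (\<Inter>i\<in>{n..}. {y. y i = 0}) \<inter> {y. sq_norm n y = 1}"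
      by (auto simp: S_def)
    then show ?thesis unfolding sq_norm_def
      by (auto intro!: closed_INT closed_Int closed_Collect_eq continuous_intros
          continuous_on_product_coordinates)
  qed
  ultimately have "compact S"
    using compact_Int_closed[OF K] by (metis Int_absorb1)
  moreover have "(\<lambda>i. if i = 0 then 1 else 0) \<in> S"
    using n sq_norm_indicator[of 0 n] by (auto simp: S_def)
  ultimately obtain x0 where "x0 \<in> S" "\<forall>y\<in>S. g x0 \<le> g y"
    using continuous_attains_inf[of S g] continuous_on_subset[OF g] by blast
  then show ?thesis using that by (auto simp: S_def)
qed

text \<open>\<open>x0\<close> minimizes the Rayleigh quotient \<open>x\<^sup>T Q x / \<parallel>x\<parallel>\<^sup>2\<close>; it exists by compactness
  of the unit sphere in the coordinates \<open>{..<n}\<close>.\<close>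
lemma rayleigh_minimizer_exists:
  assumes n: "n \<ge> 1"
  obtains x0 where "sq_norm n x0 = 1"
    "\<And>y. signless_form n E x0 * sq_norm n y \<le> signless_form n E y"
proof -
  have "continuous_on UNIV (\<lambda>x. if E i j then (x i + x j)^2 else 0 :: real)" for i j
    by (cases "E i j") (auto intro!: continuous_intros)
  then have "continuous_on UNIV (signless_form n E)"
    unfolding signless_form_def by (intro continuous_intros) auto
  then obtain x0 where x0: "sq_norm n x0 = 1"
    and min: "\<And>y. sq_norm n y = 1 \<Longrightarrow> (\<forall>i\<ge>n. y i = 0) \<Longrightarrow> signless_form n E x0 \<le> signless_form n E y"
    using unit_sphere_attains_inf[OF n] by blast
  have "signless_form n E x0 * sq_norm n y \<le> signless_form n E y" for y
  proof (cases "sq_norm n y = 0")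
    case True then show ?thesis using signless_form_nonneg[of n E y] by simp
  next
    case False
    then have pos: "sq_norm n y > 0" using sq_norm_nonneg[of n y] by simp
    define c where "c = 1 / sqrt (sq_norm n y)"
    define z where "z = (\<lambda>i. c * (if i < n then y i else 0))"
    have trunc: "sq_norm n (\<lambda>i. if i < n then y i else 0) = sq_norm n y"
        "signless_form n E (\<lambda>i. if i < n then y i else 0) = signless_form n E y"
      by (auto intro: sq_norm_cong signless_form_cong)
    have c2: "c^2 = 1 / sq_norm n y" using pos by (simp add: c_def power_divide)
    have "sq_norm n z = 1" using pos unfolding z_def sq_norm_scale trunc c2 by simp
    then have "signless_form n E x0 \<le> signless_form n E z" by (intro min) (auto simp: z_def)
    then show ?thesis using pos unfolding z_def signless_form_scale trunc c2 by (simp add: field_simps)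
  qed
  then show ?thesis using that x0 by blast
qed

text \<open>First-order optimality: perturbing a minimizer \<open>x0\<close> of the Rayleigh quotient along a
  coordinate vector gives a nonnegative quadratic in the step size, whose linear
  coefficient \<open>(Q x0 - m x0)\<^sub>k\<close> must therefore vanish.\<close>
lemma rayleigh_minimizer_eigen:
  assumes G: "simple_graph_on n E" and k: "k < n"
    and lower: "\<And>y. m * sq_norm n y \<le> signless_form n E y"
    and attained: "signless_form n E x0 = m * sq_norm n x0"
  shows "signless_apply n E x0 k = m * x0 k"
proof -
  define e where "e = (\<lambda>i::nat. if i = k then 1 else 0::real)"
  have coeff: "(\<Sum>i<n. e i * (signless_apply n E x0 i - m * x0 i)) = signless_apply n E x0 k - m * x0 k"
    unfolding e_def by (rule sum_unit_vector_mult[OF k])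
  have "0 \<le> 2 * t * (signless_apply n E x0 k - m * x0 k)
      + t^2 * (signless_form n E e - m * sq_norm n e)" for t
  proof -
    have "0 \<le> signless_form n E (\<lambda>i. x0 i + t * e i) - m * sq_norm n (\<lambda>i. x0 i + t * e i)"
      using lower[of "\<lambda>i. x0 i + t * e i"] by linarith
    then show ?thesis by (simp only: rayleigh_add_scaled[OF G] attained coeff)
  qed
  then show ?thesis using linear_coeff_zero_if_nonneg_quadratic by fastforce
qed

lemma signless_laplacian_finite_eigenvalues: "finite {a. eigenvalue (signless_laplacian n E) a}"
proof -
  have "char_poly (signless_laplacian n E) \<noteq> 0"
    using degree_monic_char_poly[OF signless_laplacian_carrier[of n E]] by auto
  then show ?thesis
    using poly_roots_finite by (simp add: eigenvalue_root_char_poly[OF signless_laplacian_carrier])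
qed

lemma eigenvalue_if_signless_apply_eq:
  assumes i: "i < n" "x i \<noteq> 0" and eigen: "\<And>k. k < n \<Longrightarrow> signless_apply n E x k = m * x k"
  shows "eigenvalue (signless_laplacian n E) m"
proof -
  let ?Q = "signless_laplacian n E"
  define v where "v = Matrix.vec n x"
  have "v \<in> carrier_vec n" by (simp add: v_def)
  moreover have "v \<noteq> 0\<^sub>v n"
    using i by (metis v_def index_vec index_zero_vec(1))
  moreover have "?Q *\<^sub>v v = m \<cdot>\<^sub>v v"
  proof (rule eq_vecI)
    fix k assume "k < dim_vec (m \<cdot>\<^sub>v v)"
    then have k: "k < n" by (simp add: v_def)
    have "(?Q *\<^sub>v v) $ k = signless_apply n E (\<lambda>j. v $ j) k"
      using k by (intro signless_laplacian_mult_vec_nth) (simp_all add: v_def)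
    also have "\<dots> = signless_apply n E x k"
      using k by (intro signless_apply_cong) (simp_all add: v_def)
    finally show "(?Q *\<^sub>v v) $ k = (m \<cdot>\<^sub>v v) $ k" using k eigen[OF k] by (simp add: v_def)
  qed (simp add: v_def signless_laplacian_def)
  ultimately show ?thesis
    unfolding eigenvalue_def eigenvector_def using signless_laplacian_carrier[of n E] by auto
qed

lemma q_min_rayleigh:
  assumes n: "n \<ge> 1" and G: "simple_graph_on n E"
  shows "eigenvalue (signless_laplacian n E) (q_min n E)"
    and "q_min n E * sq_norm n x \<le> signless_form n E x"
proof -
  let ?Q = "signless_laplacian n E"
  obtain x0 where x0: "sq_norm n x0 = 1"
    and lower: "\<And>y. signless_form n E x0 * sq_norm n y \<le> signless_form n E y"
    using rayleigh_minimizer_exists[OF n] by blast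
  define m where "m = signless_form n E x0"
  have lower_m: "m * sq_norm n y \<le> signless_form n E y" for y
    using lower by (simp add: m_def)
  have attained: "signless_form n E x0 = m * sq_norm n x0"
    using x0 by (simp add: m_def)
  have "\<exists>i<n. x0 i \<noteq> 0"
  proof (rule ccontr)
    assume "\<not> (\<exists>i<n. x0 i \<noteq> 0)"
    then have "sq_norm n x0 = 0" unfolding sq_norm_def by simp
    then show False using x0 by simp
  qed
  then obtain i where "i < n" "x0 i \<noteq> 0" by blast
  then have ev: "eigenvalue ?Q m"
    using rayleigh_minimizer_eigen[OF G _ lower_m attained] by (rule eigenvalue_if_signless_apply_eq)
  have "m \<le> a" if a: "eigenvalue ?Q a" for a
  proof -
    obtain x where "0 < sq_norm n x" "signless_form n E x = a * sq_norm n x"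
      using eigenvalue_imp_rayleigh_eq[OF G a] by blast
    then show ?thesis using lower_m[of x] by simp
  qed
  then have "q_min n E = m"
    unfolding q_min_def using ev signless_laplacian_finite_eigenvalues by (intro Min_eqI) auto
  then show "eigenvalue ?Q (q_min n E)" "q_min n E * sq_norm n x \<le> signless_form n E x"
    using ev lower_m[of x] by auto
qed

lemma q_min_ge_rayleigh_bound:
  assumes n: "n \<ge> 1" and G: "simple_graph_on n E"
    and bound: "\<And>x. c * sq_norm n x \<le> signless_form n E x"
  shows "c \<le> q_min n E"
proof -
  obtain x where "0 < sq_norm n x" "signless_form n E x = q_min n E * sq_norm n x"
    using eigenvalue_imp_rayleigh_eq[OF G q_min_rayleigh(1)[OF n G]] by blast
  then show ?thesis using bound[of x] by simp
qed

lemma q_min_nonneg: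
  assumes "n \<ge> 1" "simple_graph_on n E"
  shows "0 \<le> q_min n E"
  using q_min_ge_rayleigh_bound[OF assms, of 0] signless_form_nonneg by simp

lemma q_min_le_degree:
  assumes n: "n \<ge> 1" and G: "simple_graph_on n E" and k: "k < n"
  shows "q_min n E \<le> real (degree n E k)"
proof -
  define e where "e = (\<lambda>i::nat. if i = k then 1 else 0::real)"
  have "(\<Sum>j<n. if E k j then e j else 0) = 0"
    using simple_graph_on_irrefl[OF G, of k] by (intro sum.neutral) (auto simp: e_def)
  then have "signless_apply n E e k = real (degree n E k)"
    by (simp add: signless_apply_def) (simp add: e_def)
  then have "signless_form n E e = real (degree n E k)"
    using sum_unit_vector_mult[OF k, of "signless_apply n E e"]
    by (simp add: inner_signless_apply_self[OF G, symmetric] e_def)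
  then show ?thesis
    using q_min_rayleigh(2)[OF n G, of e] sq_norm_indicator[OF k] by (simp add: e_def)
qed

lemma q_min_le_order:
  assumes "n \<ge> 1" "simple_graph_on n E"
  shows "q_min n E \<le> real n"
  using q_min_le_degree[OF assms, of 0] degree_le_order[of n E 0] assms(1) by simp

text \<open>The blow-up of a graph \<open>E\<close> on \<open>m\<close> vertices to \<open>N\<close> vertices: vertex \<open>i\<close> becomes a copy of
  \<open>i mod m\<close>, so each vertex class is an independent set of size \<open>\<lfloor>N/m\<rfloor>\<close> or \<open>\<lceil>N/m\<rceil>\<close>.\<close>
definition blow_up :: "nat \<Rightarrow> (nat \<Rightarrow> nat \<Rightarrow> bool) \<Rightarrow> nat \<Rightarrow> nat \<Rightarrow> nat \<Rightarrow> bool" where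
  "blow_up m E N i j \<longleftrightarrow> i < N \<and> j < N \<and> E (i mod m) (j mod m)"

lemma simple_graph_on_blow_up:
  assumes "simple_graph_on m E"
  shows "simple_graph_on N (blow_up m E N)"
  using simple_graph_on_sym[OF assms] simple_graph_on_irrefl[OF assms]
  unfolding simple_graph_on_def blow_up_def by metis

lemma blow_up_no_clique:
  assumes G: "simple_graph_on m E" and m: "m \<ge> 1" and no_clique: "\<not> contains_clique m E k"
  shows "\<not> contains_clique N (blow_up m E N) k"
proof
  assume "contains_clique N (blow_up m E N) k"
  then obtain S where S: "card S = k" "\<forall>i\<in>S. \<forall>j\<in>S. i \<noteq> j \<longrightarrow> blow_up m E N i j"
    unfolding contains_clique_def by blast
  let ?class = "\<lambda>i. i mod m"
  have adj: "E (?class i) (?class j)" if "i \<in> S" "j \<in> S" "i \<noteq> j" for i j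
    using S(2) that by (simp add: blow_up_def)
  have "inj_on ?class S"
    by (intro inj_onI) (metis adj simple_graph_on_irrefl[OF G])
  then have "card (?class ` S) = k" using S(1) by (simp add: card_image)
  moreover have "?class ` S \<subseteq> {..<m}" using m by auto
  moreover have "\<forall>a\<in>?class ` S. \<forall>b\<in>?class ` S. a \<noteq> b \<longrightarrow> E a b"
    using adj by blast
  ultimately show False using no_clique unfolding contains_clique_def by blast
qed

lemma sum_lessThan_mult_reindex:
  fixes f :: "nat \<Rightarrow> 'a::comm_monoid_add"
  shows "(\<Sum>i<T * m. f i) = (\<Sum>c<m. \<Sum>k<T. f (c + m * k))"
proof -
  have bij: "bij_betw (\<lambda>(c, k). c + m * k) ({..<m} \<times> {..<T}) {..<T * m}"
  proof (rule bij_betwI[where g = "\<lambda>i. (i mod m, i div m)"])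
    show "(\<lambda>(c, k). c + m * k) \<in> {..<m} \<times> {..<T} \<rightarrow> {..<T * m}"
    proof
      fix p assume "p \<in> {..<m} \<times> {..<T}"
      then obtain c k where p: "p = (c, k)" "c < m" "k < T" by auto
      have "c + m * k < m * (k + 1)" using p by simp
      also have "\<dots> \<le> m * T" using p by (intro mult_le_mono2) simp
      finally show "(\<lambda>(c, k). c + m * k) p \<in> {..<T * m}" using p by (simp add: mult.commute)
    qed
    show "(\<lambda>i. (i mod m, i div m)) \<in> {..<T * m} \<rightarrow> {..<m} \<times> {..<T}"
    proof
      fix i assume "i \<in> {..<T * m}"
      then have i: "i < T * m" by simp
      then have "m > 0" by (cases m) auto
      then show "(i mod m, i div m) \<in> {..<m} \<times> {..<T}"
        using i by (simp add: div_less_iff_less_mult mult.commute)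
    qed
  qed auto
  have "(\<Sum>i<T * m. f i) = (\<Sum>p\<in>{..<m} \<times> {..<T}. f ((\<lambda>(c, k). c + m * k) p))"
    using sum.reindex_bij_betw[OF bij, of f] by simp
  then show ?thesis by (simp add: sum.cartesian_product split_def)
qed

lemma sum_sq_pairs:
  fixes a b :: "nat \<Rightarrow> real"
  shows "(\<Sum>k<T. \<Sum>l<T. (a k + b l)^2) =
    (sum a {..<T} + sum b {..<T})^2 + (T * (\<Sum>k<T. (a k)^2) - (sum a {..<T})^2)
      + (T * (\<Sum>k<T. (b k)^2) - (sum b {..<T})^2)"
proof -
  have "(\<Sum>k<T. \<Sum>l<T. (a k + b l)^2) = (\<Sum>k<T. \<Sum>l<T. (a k)^2 + (b l)^2 + 2 * a k * b l)"
    by (simp add: power2_sum)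
  also have "\<dots> = T * (\<Sum>k<T. (a k)^2) + T * (\<Sum>k<T. (b k)^2) + 2 * sum a {..<T} * sum b {..<T}"
    by (simp add: sum.distrib sum_distrib_left sum_distrib_right algebra_simps)
  finally show ?thesis by (simp add: power2_sum algebra_simps)
qed

text \<open>Summing \<open>y\<close> over each vertex class gives a vector \<open>A\<close> on the \<open>m\<close> vertices of \<open>E\<close>.
  The form of the blow-up splits into the form of \<open>E\<close> at \<open>A\<close>, at least \<open>q \<parallel>A\<parallel>\<^sup>2\<close>, plus the
  class variances \<open>W\<close> weighted by degrees, each at least \<open>q\<close>.\<close>
lemma sum_edges_add_eq_degree_sum:
  assumes G: "simple_graph_on m E"
  shows "(\<Sum>c<m. \<Sum>d<m. if E c d then W c + W d else 0) = 2 * (\<Sum>c<m. real (degree m E c) * W c)"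
proof -
  have swap: "(\<Sum>c<m. \<Sum>d<m. if E c d then W d else 0) = (\<Sum>c<m. \<Sum>d<m. if E c d then W c else 0)"
    by (subst sum.swap) (intro sum.cong refl, auto simp: simple_graph_on_sym[OF G])
  have "(\<Sum>c<m. \<Sum>d<m. if E c d then W c else 0) = (\<Sum>c<m. real (degree m E c) * W c)"
    by (intro sum.cong refl) (simp add: degree_eq_sum sum_distrib_right, intro sum.cong refl, simp)
  moreover have "(\<Sum>c<m. \<Sum>d<m. if E c d then W c + W d else 0) =
     (\<Sum>c<m. \<Sum>d<m. if E c d then W c else 0) + (\<Sum>c<m. \<Sum>d<m. if E c d then W d else 0)"
    by (simp add: sum.distrib[symmetric]) (intro sum.cong refl, simp)
  ultimately show ?thesis using swap by simp
qed

lemma signless_form_blow_up: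
  assumes G: "simple_graph_on m E"
  shows "signless_form (T * m) (blow_up m E (T * m)) y
    = signless_form m E (\<lambda>c. \<Sum>k<T. y (c + m * k))
      + (\<Sum>c<m. real (degree m E c) * (real T * (\<Sum>k<T. (y (c + m * k))^2) - (\<Sum>k<T. y (c + m * k))^2))"
    (is "_ = signless_form m E ?A + (\<Sum>c<m. real (degree m E c) * ?W c)")
proof -
  define a where "a = (\<lambda>c k. y (c + m * k))"
  have in_range: "c + m * k < T * m" if "c < m" "k < T" for c k
  proof -
    have "c + m * k < m * (k + 1)" using that by simp
    also have "\<dots> \<le> m * T" using that by (intro mult_le_mono2) simp
    finally show ?thesis by (simp add: mult.commute)
  qed
  have adj: "blow_up m E (T * m) (c + m * k) (d + m * l) = E c d"
    if "c < m" "k < T" "d < m" "l < T" for c k d l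
    using that in_range[of c k] in_range[of d l] unfolding blow_up_def by simp
  have "2 * signless_form (T * m) (blow_up m E (T * m)) y =
      (\<Sum>c<m. \<Sum>k<T. \<Sum>d<m. \<Sum>l<T. if E c d then (a c k + a d l)^2 else 0)"
    unfolding signless_form_def sum_lessThan_mult_reindex[of _ T m]
    by simp (intro sum.cong refl, simp add: adj a_def)
  also have "\<dots> = (\<Sum>c<m. \<Sum>d<m. \<Sum>k<T. \<Sum>l<T. if E c d then (a c k + a d l)^2 else 0)"
    by (rule sum.cong[OF refl], rule sum.swap)
  also have "\<dots> = (\<Sum>c<m. \<Sum>d<m. if E c d then (?A c + ?A d)^2 + ?W c + ?W d else 0)"
    by (intro sum.cong refl) (simp add: a_def sum_sq_pairs)
  also have "\<dots> = 2 * signless_form m E ?A + (\<Sum>c<m. \<Sum>d<m. if E c d then ?W c + ?W d else 0)"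
    unfolding signless_form_def by (simp add: sum.distrib[symmetric]) (intro sum.cong refl, simp)
  finally show ?thesis unfolding sum_edges_add_eq_degree_sum[OF G] by simp
qed

lemma q_min_blow_up_mult:
  assumes m: "m \<ge> 1" and G: "simple_graph_on m E"
  shows "real T * q_min m E * sq_norm (T * m) y \<le> signless_form (T * m) (blow_up m E (T * m)) y"
proof -
  define q where "q = q_min m E"
  define a where "a = (\<lambda>c k. y (c + m * k))"
  define A where "A = (\<lambda>c. \<Sum>k<T. a c k)"
  define Sa where "Sa = (\<lambda>c. \<Sum>k<T. (a c k)^2)"
  define W where "W = (\<lambda>c. real T * Sa c - (A c)^2)"
  have split: "signless_form (T * m) (blow_up m E (T * m)) y
      = signless_form m E A + (\<Sum>c<m. real (degree m E c) * W c)"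
    unfolding signless_form_blow_up[OF G] by (simp add: A_def W_def Sa_def a_def)
  have "W c \<ge> 0" for c
    using sum_squared_le_sum_of_squares[of "a c" "{..<T}"] by (simp add: W_def A_def Sa_def mult.commute)
  then have "q * (\<Sum>c<m. W c) \<le> (\<Sum>c<m. real (degree m E c) * W c)"
    unfolding sum_distrib_left
    by (intro sum_mono mult_right_mono) (use q_min_le_degree[OF m G] in \<open>auto simp: q_def\<close>)
  moreover have "q * sq_norm m A \<le> signless_form m E A"
    using q_min_rayleigh(2)[OF m G] by (simp add: q_def)
  moreover have "real T * q * sq_norm (T * m) y = q * sq_norm m A + q * (\<Sum>c<m. W c)"
  proof -
    have "sq_norm (T * m) y = (\<Sum>c<m. Sa c)"
      unfolding sq_norm_def sum_lessThan_mult_reindex[of _ T m] by (simp add: Sa_def a_def)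
    then have "real T * q * sq_norm (T * m) y = q * (real T * (\<Sum>c<m. Sa c))"
      by (simp add: mult_ac)
    also have "real T * (\<Sum>c<m. Sa c) = sq_norm m A + (\<Sum>c<m. W c)"
      unfolding sq_norm_def W_def by (simp add: sum.distrib[symmetric] sum_distrib_left)
    finally show ?thesis by (simp add: distrib_left)
  qed
  ultimately show ?thesis unfolding split q_def[symmetric] by linarith
qed

lemma sum_lessThan_if_less:
  fixes h :: "nat \<Rightarrow> real"
  assumes "N \<le> M"
  shows "(\<Sum>i<M. if i < N then h i else 0) = (\<Sum>i<N. h i)"
proof -
  have "{i\<in>{..<M}. i < N} = {..<N}" using assms by auto
  then show ?thesis using sum.inter_filter[of "{..<M}" h "\<lambda>i. i < N"] by simp
qed

lemma sum_lessThan_if_ge: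
  fixes c :: real
  shows "(\<Sum>j<M. if N \<le> j then c else 0) = real (M - N) * c"
proof -
  have "{j\<in>{..<M}. N \<le> j} = {N..<M}" by auto
  then show ?thesis using sum.inter_filter[of "{..<M}" "\<lambda>_. c" "\<lambda>j. N \<le> j"] by simp
qed

text \<open>Extending \<open>x\<close> by zeros from an induced subgraph \<open>F\<close> on the first \<open>N\<close> vertices to \<open>E\<close>
  adds only the edges leaving \<open>{..<N}\<close>, each contributing some \<open>(x i)\<^sup>2\<close>.\<close>
lemma signless_form_zero_extension_le:
  assumes NM: "N \<le> M" and induced: "\<And>i j. i < N \<Longrightarrow> j < N \<Longrightarrow> F i j = E i j"
  shows "signless_form M E (\<lambda>i. if i < N then x i else 0)
    \<le> signless_form N F x + real (M - N) * sq_norm N x"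
proof -
  define x' where "x' = (\<lambda>i. if i < N then x i else 0)"
  define g where "g = (\<lambda>i j. if F i j then (x i + x j)^2 else 0)"
  define h where "h = (\<lambda>i j. if i < N then if N \<le> j then (x i)^2 else 0 else 0)"
  have bound: "(if E i j then (x' i + x' j)^2 else 0) \<le>
      (if i < N then if j < N then g i j else 0 else 0) + h i j + h j i" for i j
    using induced[of i j] by (cases "i < N"; cases "j < N") (auto simp: x'_def g_def h_def)
  have "(\<Sum>i<M. \<Sum>j<M. if i < N then if j < N then g i j else 0 else 0)
      = (\<Sum>i<M. if i < N then (\<Sum>j<M. if j < N then g i j else 0) else 0)"
    by (intro sum.cong refl) auto
  then have inner: "(\<Sum>i<M. \<Sum>j<M. if i < N then if j < N then g i j else 0 else 0)
      = 2 * signless_form N F x"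
    using NM by (simp add: signless_form_def g_def sum_lessThan_if_less)
  have "(\<Sum>i<M. \<Sum>j<M. h i j) = (\<Sum>i<M. if i < N then (\<Sum>j<M. if N \<le> j then (x i)^2 else 0) else 0)"
    unfolding h_def by (intro sum.cong refl) auto
  also have "\<dots> = (\<Sum>i<N. real (M - N) * (x i)^2)"
    using NM by (simp add: sum_lessThan_if_less sum_lessThan_if_ge)
  finally have outer: "(\<Sum>i<M. \<Sum>j<M. h i j) = real (M - N) * sq_norm N x"
    by (simp add: sq_norm_def sum_distrib_left)
  have "2 * signless_form M E x' \<le> (\<Sum>i<M. \<Sum>j<M.
      (if i < N then if j < N then g i j else 0 else 0) + h i j + h j i)"
    unfolding signless_form_def by (simp add: sum_mono bound)
  also have "\<dots> = 2 * signless_form N F x + 2 * real (M - N) * sq_norm N x"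
    by (simp add: sum.distrib inner outer sum.swap[of "\<lambda>i j. h j i"])
  finally show ?thesis by (simp add: x'_def)
qed

lemma q_min_blow_up_lower:
  assumes m: "m \<ge> 1" and G: "simple_graph_on m E" and N: "N \<ge> 1"
  shows "real N / real m * q_min m E - real m \<le> q_min N (blow_up m E N)"
proof (rule q_min_ge_rayleigh_bound[OF N simple_graph_on_blow_up[OF G]])
  fix x :: "nat \<Rightarrow> real"
  define T where "T = N div m + 1"
  define M where "M = T * m"
  have M: "M = N div m * m + m" by (simp add: M_def T_def)
  have NM: "N \<le> M"
    using m mod_less_divisor[of m N] div_mult_mod_eq[of N m] unfolding M by linarith
  have MN: "M - N \<le> m"
    using div_times_less_eq_dividend[of N m] unfolding M by linarith
  have "sq_norm M (\<lambda>i. if i < N then x i else 0) = sq_norm N x"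
    using NM unfolding sq_norm_def by (simp add: if_distrib[of "\<lambda>s. s^2"] sum_lessThan_if_less cong: if_cong)
  then have "real T * q_min m E * sq_norm N x
      \<le> signless_form M (blow_up m E M) (\<lambda>i. if i < N then x i else 0)"
    using q_min_blow_up_mult[OF m G, of T] unfolding M_def by metis
  also have "\<dots> \<le> signless_form N (blow_up m E N) x + real (M - N) * sq_norm N x"
    using NM by (intro signless_form_zero_extension_le) (auto simp: blow_up_def)
  also have "\<dots> \<le> signless_form N (blow_up m E N) x + real m * sq_norm N x"
    using MN sq_norm_nonneg[of N x] by (intro add_left_mono mult_right_mono) auto
  finally have "real T * q_min m E * sq_norm N x - real m * sq_norm N x \<le> signless_form N (blow_up m E N) x"
    by simp
  moreover have "real N / real m * q_min m E * sq_norm N x \<le> real T * q_min m E * sq_norm N x"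
  proof -
    have "real N \<le> real T * real m" using NM by (metis M_def of_nat_le_iff of_nat_mult)
    then have "real N / real m \<le> real T" using m by (simp add: divide_le_eq)
    then show ?thesis
      using q_min_nonneg[OF m G] sq_norm_nonneg[of N x] by (intro mult_right_mono) auto
  qed
  ultimately show "(real N / real m * q_min m E - real m) * sq_norm N x \<le> signless_form N (blow_up m E N) x"
    by (simp add: left_diff_distrib)
qed

lemma finite_q_min_values: "finite {q_min n E | E. simple_graph_on n E \<and> P E}"
proof (rule finite_subset)
  show "{q_min n E | E. simple_graph_on n E \<and> P E}
      \<subseteq> (\<lambda>S. q_min n (\<lambda>i j. (i, j) \<in> S)) ` Pow ({..<n} \<times> {..<n})"
  proof
    fix a assume "a \<in> {q_min n E | E. simple_graph_on n E \<and> P E}"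
    then obtain E where E: "a = q_min n E" "simple_graph_on n E" by blast
    define S where "S = {(i, j). E i j}"
    have "E = (\<lambda>i j. (i, j) \<in> S)" by (simp add: S_def)
    moreover have "S \<in> Pow ({..<n} \<times> {..<n})" using E(2) by (auto simp: S_def simple_graph_on_def)
    ultimately show "a \<in> (\<lambda>S. q_min n (\<lambda>i j. (i, j) \<in> S)) ` Pow ({..<n} \<times> {..<n})"
      using E(1) by blast
  qed
qed simp

lemma simple_graph_on_edgeless: "simple_graph_on n (\<lambda>_ _. False)"
  by (simp add: simple_graph_on_def)

lemma edgeless_no_clique:
  assumes "k \<ge> 2"
  shows "\<not> contains_clique n (\<lambda>_ _. False) k"
proof
  assume "contains_clique n (\<lambda>_ _. False) k"
  then obtain S :: "nat set" where S: "S \<subseteq> {..<n}" "card S = k" "\<forall>i\<in>S. \<forall>j\<in>S. i = j"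
    unfolding contains_clique_def by blast
  have "finite S" using S(1) finite_subset by blast
  then have "card S \<le> Suc 0" using S(3) by (subst card_le_Suc0_iff_eq) blast+
  then show False using S(2) assms by simp
qed

lemma f_r_attained:
  assumes "r \<ge> 1"
  obtains E where "simple_graph_on n E" "\<not> contains_clique n E (r + 1)" "f_r r n = q_min n E"
proof -
  have "q_min n (\<lambda>_ _. False) \<in> {q_min n E | E. simple_graph_on n E \<and> \<not> contains_clique n E (r + 1)}"
    unfolding mem_Collect_eq using simple_graph_on_edgeless[of n] edgeless_no_clique[of "r + 1" n] assms
    by (intro exI[of _ "\<lambda>_ _. False"]) simp
  then have "{q_min n E | E. simple_graph_on n E \<and> \<not> contains_clique n E (r + 1)} \<noteq> {}"
    by (metis empty_iff)
  then have "f_r r n \<in> {q_min n E | E. simple_graph_on n E \<and> \<not> contains_clique n E (r + 1)}"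
    unfolding f_r_def by (rule Max_in[OF finite_q_min_values])
  then show ?thesis unfolding mem_Collect_eq using that by auto
qed

lemma q_min_le_f_r:
  assumes "simple_graph_on n E" "\<not> contains_clique n E (r + 1)"
  shows "q_min n E \<le> f_r r n"
  unfolding f_r_def using assms by (intro Max_ge[OF finite_q_min_values]) blast

lemma bdd_above_c_r:
  "bdd_above {q_min n E / real n | n E. n \<ge> 1 \<and> simple_graph_on n E \<and> \<not> contains_clique n E (r + 1)}"
  by (rule bdd_aboveI[of _ 1]) (auto simp: divide_le_eq q_min_le_order)

lemma f_r_div_le_c_r:
  assumes "r \<ge> 1" "n \<ge> 1"
  shows "f_r r n / real n \<le> c_r r"
proof -
  obtain E where "simple_graph_on n E" "\<not> contains_clique n E (r + 1)" "f_r r n = q_min n E"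
    using f_r_attained[OF assms(1)] by blast
  then show ?thesis
    unfolding c_r_def using assms(2) by (intro cSup_upper[OF _ bdd_above_c_r]) auto
qed

lemma eventually_less_f_r_div:
  assumes r: "r \<ge> 1" and a: "a < c_r r"
  shows "eventually (\<lambda>n. a < f_r r n / real n) sequentially"
proof -
  let ?C = "{q_min n E / real n | n E. n \<ge> 1 \<and> simple_graph_on n E \<and> \<not> contains_clique n E (r + 1)}"
  have "q_min 1 (\<lambda>_ _. False) / real 1 \<in> ?C"
    unfolding mem_Collect_eq using simple_graph_on_edgeless[of 1] edgeless_no_clique[of "r + 1" 1] r
    by (intro exI[of _ 1] exI[of _ "\<lambda>_ _. False"]) simp
  then have ne: "?C \<noteq> {}" by (metis empty_iff)
  have "a < Sup ?C" using a by (simp add: c_r_def)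
  then have "\<exists>y\<in>?C. a < y" unfolding less_cSup_iff[OF ne bdd_above_c_r] .
  then obtain y where "y \<in> ?C" "a < y" ..
  then obtain m E where m: "m \<ge> 1" and G: "simple_graph_on m E"
    and no_clique: "\<not> contains_clique m E (r + 1)" and aq: "a < q_min m E / real m"
    unfolding mem_Collect_eq by auto
  define \<delta> where "\<delta> = q_min m E / real m - a"
  have \<delta>: "\<delta> > 0" using aq by (simp add: \<delta>_def)
  obtain N :: nat where N: "real m / \<delta> < real N" using reals_Archimedean2 by blast
  have "a < f_r r n / real n" if n: "n \<ge> max 1 N" for n
  proof -
    have n1: "n \<ge> 1" and "real m / \<delta> < real n" using n N of_nat_mono[of N n] by auto
    then have "real m < real n * \<delta>" using \<delta> by (simp add: divide_less_eq)
    then have "real m / real n < \<delta>" using n1 by (simp add: divide_less_eq mult.commute)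
    have "q_min m E / real m - real m / real n = (real n / real m * q_min m E - real m) / real n"
      using n1 by (simp add: field_simps)
    also have "\<dots> \<le> q_min n (blow_up m E n) / real n"
      using q_min_blow_up_lower[OF m G n1] by (rule divide_right_mono) simp
    also have "\<dots> \<le> f_r r n / real n"
      using q_min_le_f_r[OF simple_graph_on_blow_up[OF G] blow_up_no_clique[OF G m no_clique]]
      by (rule divide_right_mono) simp
    finally have "q_min m E / real m - real m / real n \<le> f_r r n / real n" .
    then show ?thesis using \<open>real m / real n < \<delta>\<close> by (simp add: \<delta>_def)
  qed
  then show ?thesis unfolding eventually_sequentially by blast
qed

theorem theorem2:
  fixes r :: nat
  assumes "r \<ge> 2"
  shows "(\<lambda>n. f_r r n / real n) \<longlonglongrightarrow> c_r r"
proof (rule order_tendstoI)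
  have r: "r \<ge> 1" using assms by simp
  show "eventually (\<lambda>n. a < f_r r n / real n) sequentially" if "a < c_r r" for a
    using eventually_less_f_r_div[OF r that] .
  show "eventually (\<lambda>n. f_r r n / real n < b) sequentially" if b: "c_r r < b" for b
  proof -
    have "f_r r n / real n < b" if "n \<ge> 1" for n
      using f_r_div_le_c_r[OF r that] b by linarith
    then show ?thesis unfolding eventually_sequentially by blast
  qed
qed

end
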